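(* Let $\vec W$ be an irreducible $\mathcal Y$-valued transition matrix on $\mathcal X$. For every $g'\in\mathcal G$ there exists a unique $g\in\mathcal G_1$ with $g-g'\in\mathcal N$. Consequently $\mathcal G_1$ is a complement of $\mathcal N$ in $\mathcal G$, and the quotient map restricts to a linear isomorphism $\mathcal G_1\cong\mathcal G/\mathcal N$.
   Context: Let $\mathcal X=\{1,\dots,d\}$, $\mathcal Y=\{1,\dots,d_Y\}$ be finite sets, $u_{\mathcal X}\in\mathbb R^{\mathcal X}$ the all-ones vector. A $\mathcal Y$-valued transition matrix on $\mathcal X$ is a family $\vec W=(W_y)_{y\in\mathcal Y}$ of $d\times d$ nonnegative matrices $W_y(x|x')$ ($x$ row, $x'$ column) with $|\vec W|:=\sum_yW_y$ column-stochastic; irreducible means $|\vec W|$ irreducible. Let $S:=\{(y,x,x'):W_y(x|x')>0\}$ be the support of $\vec W$ and $\mathcal G$ the vector space of real functions on $S$; an element $g\in\mathcal G$ is identified with the tuple $(g_y)_y$ of $d\times d$ matrices $g_y(x|x')=g(y,x,x')$ (set to $0$ off $S$). Define $(\vec W_*g)_y(x|x'):=g(y,x,x')W_y(x|x')$. $\mathcal N:=\{g\in\mathcal G:\ g(y,x,x')=f(x)-f(x')+c$ on $S$ for some $f:\mathcal X\to\mathbb R$, $c\in\mathbb R\}$. $\mathcal G_1:=\{g\in\mathcal G:\ \sum_{y}(\vec W_*g)_y^Tu_{\mathcal X}=0\}$, i.e. $\sum_{y,x}g(y,x,x')W_y(x|x')=0$ for all $x'$. *)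

theory Defs
  imports Complex_Main
begin

text \<open>A Y-valued transition matrix on X is represented by
  W :: 'y => 'x => 'x => real, with W y x x' = W_y(x|x') (x row, x' column).
  X and Y are finite types.\<close>

definition abs_W :: "('y::finite \<Rightarrow> 'x::finite \<Rightarrow> 'x \<Rightarrow> real) \<Rightarrow> 'x \<Rightarrow> 'x \<Rightarrow> real" where
  "abs_W W x x' = (\<Sum>y\<in>UNIV. W y x x')"

definition transition_matrix :: "('y::finite \<Rightarrow> 'x::finite \<Rightarrow> 'x \<Rightarrow> real) \<Rightarrow> bool" where
  "transition_matrix W \<longleftrightarrow> (\<forall>y x x'. 0 \<le> W y x x') \<and>
     (\<forall>x'. (\<Sum>x\<in>UNIV. abs_W W x x') = 1)"

definition irreducible_matrix :: "('x::finite \<Rightarrow> 'x \<Rightarrow> real) \<Rightarrow> bool" where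
  "irreducible_matrix A \<longleftrightarrow> (\<forall>i j. (i, j) \<in> {(x', x). A x x' > 0}\<^sup>*)"

definition irreducible_tm :: "('y::finite \<Rightarrow> 'x::finite \<Rightarrow> 'x \<Rightarrow> real) \<Rightarrow> bool" where
  "irreducible_tm W \<longleftrightarrow> transition_matrix W \<and> irreducible_matrix (abs_W W)"

definition supp :: "('y \<Rightarrow> 'x \<Rightarrow> 'x \<Rightarrow> real) \<Rightarrow> ('y \<times> 'x \<times> 'x) set" where
  "supp W = {(y, x, x'). W y x x' > 0}"

text \<open>G: real functions on the support, extended by 0 off the support.\<close>
definition GG :: "('y \<Rightarrow> 'x \<Rightarrow> 'x \<Rightarrow> real) \<Rightarrow> ('y \<Rightarrow> 'x \<Rightarrow> 'x \<Rightarrow> real) set" where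
  "GG W = {g. \<forall>y x x'. (y, x, x') \<notin> supp W \<longrightarrow> g y x x' = 0}"

definition NN :: "('y \<Rightarrow> 'x \<Rightarrow> 'x \<Rightarrow> real) \<Rightarrow> ('y \<Rightarrow> 'x \<Rightarrow> 'x \<Rightarrow> real) set" where
  "NN W = {g \<in> GG W. \<exists>(f::'x \<Rightarrow> real) (c::real).
      \<forall>y x x'. (y, x, x') \<in> supp W \<longrightarrow> g y x x' = f x - f x' + c}"

definition G1 :: "('y::finite \<Rightarrow> 'x::finite \<Rightarrow> 'x \<Rightarrow> real) \<Rightarrow> ('y \<Rightarrow> 'x \<Rightarrow> 'x \<Rightarrow> real) set" where
  "G1 W = {g \<in> GG W. \<forall>x'. (\<Sum>y\<in>UNIV. \<Sum>x\<in>UNIV. g y x x' * W y x x') = 0}"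

end

theory Submission imports Defs "HOL-Analysis.Analysis" begin

text \<open>Writing an element of \<open>\<N>\<close> as \<open>f x - f x' + c\<close> on the support, the condition defining
  \<open>\<G>\<^sub>1\<close> for \<open>g' + n\<close> becomes the Poisson-type equation
  \<open>|W|\<^sup>T f - f + c = - (W\<^sub>* g')\<^sup>T u\<close>. For a column-stochastic irreducible matrix the homogeneous
  equation \<open>|W|\<^sup>T f = f - c\<close> forces \<open>c = 0\<close> (look at a maximum and a minimum of \<open>f\<close>) and then
  \<open>f\<close> constant (a maximum propagates along the edges of the strongly connected graph). Hence
  \<open>\<G>\<^sub>1 \<inter> \<N> = 0\<close>, and by finite dimension the corresponding linear map is also onto,
  which gives existence.\<close>

lemma finite_UNIV_has_max:
  fixes f :: "'a::finite \<Rightarrow> 'b::linorder"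
  obtains p where "\<And>x. f x \<le> f p"
proof -
  have "Max (range f) \<in> range f" by (rule Max_in) auto
  then obtain p where "f p = Max (range f)" by (metis rangeE)
  then show ?thesis by (intro that[of p]) simp
qed

definition column_stochastic :: "('x::finite \<Rightarrow> 'x \<Rightarrow> real) \<Rightarrow> bool" where
  "column_stochastic A \<longleftrightarrow> (\<forall>x x'. 0 \<le> A x x') \<and> (\<forall>x'. (\<Sum>x\<in>UNIV. A x x') = 1)"

lemma column_stochastic_mean_le:
  assumes "column_stochastic A" and "\<And>x. f x \<le> m"
  shows "(\<Sum>x\<in>UNIV. A x x' * f x) \<le> m"
proof -
  have "(\<Sum>x\<in>UNIV. A x x' * f x) \<le> (\<Sum>x\<in>UNIV. A x x' * m)"
    using assms by (intro sum_mono mult_left_mono) (auto simp: column_stochastic_def)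
  also have "\<dots> = m"
    using assms(1) by (simp add: column_stochastic_def sum_distrib_right[symmetric])
  finally show ?thesis .
qed

lemma column_stochastic_shift_nonneg:
  assumes "column_stochastic A" and shift: "\<And>x'. (\<Sum>x\<in>UNIV. A x x' * f x) = f x' - c"
  shows "0 \<le> c"
proof -
  obtain p where p: "\<And>x. f x \<le> f p"
    using finite_UNIV_has_max by blast
  have "(\<Sum>x\<in>UNIV. A x p * f x) \<le> f p"
    by (rule column_stochastic_mean_le[OF assms(1) p])
  then show ?thesis using shift[of p] by simp
qed

lemma column_stochastic_shift_zero:
  assumes A: "column_stochastic A" and shift: "\<And>x'. (\<Sum>x\<in>UNIV. A x x' * f x) = f x' - c"
  shows "c = 0"
proof -
  have "(\<Sum>x\<in>UNIV. A x x' * - f x) = - f x' - (- c)" for x'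
    using shift[of x'] by (simp add: sum_negf)
  with column_stochastic_shift_nonneg[OF A] shift show ?thesis
    by (metis neg_0_le_iff_le order_antisym)
qed

lemma column_stochastic_harmonic_max_step:
  assumes A: "column_stochastic A" and harm: "\<And>x'. (\<Sum>x\<in>UNIV. A x x' * f x) = f x'"
    and max: "\<And>x. f x \<le> f y" and edge: "A z y > 0"
  shows "f z = f y"
proof -
  have "(\<Sum>x\<in>UNIV. A x y * (f y - f x)) = f y * (\<Sum>x\<in>UNIV. A x y) - (\<Sum>x\<in>UNIV. A x y * f x)"
    by (simp add: right_diff_distrib sum_subtractf sum_distrib_left mult.commute)
  also have "\<dots> = 0"
    using A harm[of y] by (simp add: column_stochastic_def)
  finally have "A z y * (f y - f z) = 0"
    using A max by (subst (asm) sum_nonneg_eq_0_iff) (auto simp: column_stochastic_def)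
  with edge show ?thesis by simp
qed

lemma irreducible_harmonic_const:
  assumes A: "column_stochastic A" and irr: "irreducible_matrix A"
    and harm: "\<And>x'. (\<Sum>x\<in>UNIV. A x x' * f x) = f x'"
  shows "f x = f x'"
proof -
  obtain p where p: "\<And>x. f x \<le> f p"
    using finite_UNIV_has_max by blast
  have "f j = f p" for j
  proof -
    have "(p, j) \<in> {(x', x). A x x' > 0}\<^sup>*"
      using irr unfolding irreducible_matrix_def by blast
    then show ?thesis
    proof (induction rule: rtrancl_induct)
      case (step y z)
      then show ?case
        using column_stochastic_harmonic_max_step[OF A harm, of y z] p by auto
    qed simp
  qed
  then show ?thesis by metis
qed

lemma irreducible_shift_const:
  assumes A: "column_stochastic A" and irr: "irreducible_matrix A"
    and shift: "\<And>x'. (\<Sum>x\<in>UNIV. A x x' * f x) = f x' - c"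
  shows "c = 0" and "f x = f x'"
proof -
  show c: "c = 0" using column_stochastic_shift_zero[OF A shift] .
  show "f x = f x'" using irreducible_harmonic_const[OF A irr] shift by (simp add: c)
qed

text \<open>Pinning the constant as \<open>c = f r\<close> makes the map \<open>f \<mapsto> A\<^sup>T f - f + f r\<close> an
  endomorphism of \<open>\<real>\<^sup>\<X>\<close>; it is injective by the maximum principle, hence onto.\<close>
lemma irreducible_poisson_solvable:
  fixes A :: "'x::finite \<Rightarrow> 'x \<Rightarrow> real"
  assumes A: "column_stochastic A" and irr: "irreducible_matrix A"
  shows "\<exists>f. \<forall>x'. (\<Sum>x\<in>UNIV. A x x' * f x) - f x' + f r = b x'"
proof -
  define M :: "real^'x \<Rightarrow> real^'x" where
    "M v = (\<chi> x'. (\<Sum>x\<in>UNIV. A x x' * v$x) - v$x' + v$r)" for v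
  have lin: "linear M"
    by (rule linearI) (auto simp: M_def vec_eq_iff sum.distrib algebra_simps sum_distrib_left)
  have "inj M"
  proof (rule injI)
    fix u v assume "M u = M v"
    then have "M (u - v) = 0" using linear_diff[OF lin] by simp
    then have shift: "(\<Sum>x\<in>UNIV. A x x' * (u - v)$x) = (u - v)$x' - (u - v)$r" for x'
      unfolding M_def vec_eq_iff by (auto simp: algebra_simps)
    have "(u - v)$x = (u - v)$r" for x
      by (rule irreducible_shift_const(2)[OF A irr shift])
    moreover have "(u - v)$r = 0"
      by (rule irreducible_shift_const(1)[OF A irr shift])
    ultimately show "u = v"
      by (simp add: vec_eq_iff)
  qed
  then obtain v where "M v = (\<chi> x. b x)"
    using linear_inj_imp_surj[OF lin] by (metis surjD)
  then show ?thesis unfolding M_def vec_eq_iff by auto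
qed

lemma transition_matrix_column_stochastic:
  "transition_matrix W \<Longrightarrow> column_stochastic (abs_W W)"
  by (simp add: transition_matrix_def column_stochastic_def abs_W_def sum_nonneg)

lemma transition_matrix_off_supp:
  "transition_matrix W \<Longrightarrow> (y, x, x') \<notin> supp W \<Longrightarrow> W y x x' = 0"
  unfolding transition_matrix_def supp_def by (metis case_prod_conv mem_Collect_eq order_le_less)

definition colsum_weighted ::
    "('y::finite \<Rightarrow> 'x::finite \<Rightarrow> 'x \<Rightarrow> real) \<Rightarrow> ('y \<Rightarrow> 'x \<Rightarrow> 'x \<Rightarrow> real) \<Rightarrow> 'x \<Rightarrow> real" where
  "colsum_weighted W g x' = (\<Sum>y\<in>UNIV. \<Sum>x\<in>UNIV. g y x x' * W y x x')"

lemma G1_iff: "g \<in> G1 W \<longleftrightarrow> g \<in> GG W \<and> (\<forall>x'. colsum_weighted W g x' = 0)"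
  by (simp add: G1_def colsum_weighted_def)

lemma colsum_weighted_add:
  "colsum_weighted W (\<lambda>y x x'. g y x x' + h y x x') x' = colsum_weighted W g x' + colsum_weighted W h x'"
  by (simp add: colsum_weighted_def distrib_right sum.distrib)

lemma colsum_weighted_diff:
  "colsum_weighted W (\<lambda>y x x'. g y x x' - h y x x') x' = colsum_weighted W g x' - colsum_weighted W h x'"
  by (simp add: colsum_weighted_def left_diff_distrib sum_subtractf)

definition potential :: "('y \<Rightarrow> 'x \<Rightarrow> 'x \<Rightarrow> real) \<Rightarrow> ('x \<Rightarrow> real) \<Rightarrow> real \<Rightarrow> 'y \<Rightarrow> 'x \<Rightarrow> 'x \<Rightarrow> real" where
  "potential W f c = (\<lambda>y x x'. if (y, x, x') \<in> supp W then f x - f x' + c else 0)"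

lemma NN_iff_potential: "n \<in> NN W \<longleftrightarrow> (\<exists>f c. n = potential W f c)"
proof
  assume "n \<in> NN W"
  then obtain f c where "n \<in> GG W" "\<forall>y x x'. (y, x, x') \<in> supp W \<longrightarrow> n y x x' = f x - f x' + c"
    by (auto simp: NN_def)
  then have "n = potential W f c" by (auto simp: GG_def potential_def fun_eq_iff)
  then show "\<exists>f c. n = potential W f c" by blast
next
  assume "\<exists>f c. n = potential W f c"
  then obtain f c where "n = potential W f c" by blast
  then show "n \<in> NN W"
    unfolding NN_def GG_def potential_def by (intro CollectI conjI exI[of _ f] exI[of _ c]) auto
qed

lemma potential_diff:
  "(\<lambda>y x x'. potential W f c y x x' - potential W f' c' y x x') =
    potential W (\<lambda>x. f x - f' x) (c - c')"
  by (auto simp: potential_def fun_eq_iff)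

lemma NN_diff: "a \<in> NN W \<Longrightarrow> b \<in> NN W \<Longrightarrow> (\<lambda>y x x'. a y x x' - b y x x') \<in> NN W"
proof -
  assume "a \<in> NN W" "b \<in> NN W"
  then obtain f c f' c' where "a = potential W f c" "b = potential W f' c'"
    by (auto simp: NN_iff_potential)
  then show ?thesis
    using potential_diff[of W f c f' c'] by (auto simp: NN_iff_potential)
qed

lemma colsum_weighted_potential:
  assumes "transition_matrix W"
  shows "colsum_weighted W (potential W f c) x' = (\<Sum>x\<in>UNIV. abs_W W x x' * f x) - f x' + c"
proof -
  have off_supp: "potential W f c y x x' * W y x x' = (f x - f x' + c) * W y x x'" for y x
    using transition_matrix_off_supp[OF assms] by (auto simp: potential_def)
  have "colsum_weighted W (potential W f c) x' = (\<Sum>y\<in>UNIV. \<Sum>x\<in>UNIV. (f x - f x' + c) * W y x x')"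
    by (simp only: colsum_weighted_def off_supp)
  also have "\<dots> = (\<Sum>x\<in>UNIV. abs_W W x x' * (f x - f x' + c))"
    unfolding abs_W_def sum_distrib_right by (subst sum.swap) (simp add: mult.commute)
  also have "\<dots> = (\<Sum>x\<in>UNIV. abs_W W x x' * f x) - (f x' - c) * (\<Sum>x\<in>UNIV. abs_W W x x')"
    by (simp add: algebra_simps sum.distrib sum_subtractf sum_distrib_left sum_distrib_right)
  finally show ?thesis
    using assms by (simp add: transition_matrix_def)
qed

lemma G1_inter_NN_zero:
  assumes W: "irreducible_tm W" and "g \<in> G1 W" and "g \<in> NN W"
  shows "g = (\<lambda>y x x'. 0)"
proof -
  have tm: "transition_matrix W" and irr: "irreducible_matrix (abs_W W)"
    using W by (auto simp: irreducible_tm_def)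
  obtain f c where g: "g = potential W f c"
    using \<open>g \<in> NN W\<close> by (auto simp: NN_iff_potential)
  have "(\<Sum>x\<in>UNIV. abs_W W x x' * f x) = f x' - c" for x'
    using \<open>g \<in> G1 W\<close> colsum_weighted_potential[OF tm, of f c x'] by (simp add: G1_iff g)
  note const = irreducible_shift_const[OF transition_matrix_column_stochastic[OF tm] irr this]
  show ?thesis
    unfolding g potential_def using const by (auto simp: fun_eq_iff)
qed

lemma exists_G1_NN_translate:
  fixes W :: "'y::finite \<Rightarrow> 'x::finite \<Rightarrow> 'x \<Rightarrow> real"
  assumes W: "irreducible_tm W" and g': "g' \<in> GG W"
  shows "\<exists>g. g \<in> G1 W \<and> (\<lambda>y x x'. g y x x' - g' y x x') \<in> NN W"
proof -
  have tm: "transition_matrix W" and irr: "irreducible_matrix (abs_W W)"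
    using W by (auto simp: irreducible_tm_def)
  fix r :: 'x
  obtain f where f: "\<And>x'. (\<Sum>x\<in>UNIV. abs_W W x x' * f x) - f x' + f r = - colsum_weighted W g' x'"
    using irreducible_poisson_solvable[OF transition_matrix_column_stochastic[OF tm] irr,
        where r = r and b = "\<lambda>x'. - colsum_weighted W g' x'"] by blast
  define g where "g y x x' = g' y x x' + potential W f (f r) y x x'" for y x x'
  have "g \<in> GG W"
    using g' by (simp add: GG_def g_def potential_def)
  moreover have "colsum_weighted W g x' = 0" for x'
    using f[of x'] by (simp add: g_def[abs_def] colsum_weighted_add colsum_weighted_potential[OF tm])
  moreover have "(\<lambda>y x x'. g y x x' - g' y x x') \<in> NN W"
    by (auto simp: g_def NN_iff_potential)
  ultimately show ?thesis by (auto simp: G1_iff)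
qed

lemma unique_G1_NN_translate:
  assumes W: "irreducible_tm W"
    and g1: "g1 \<in> G1 W" "(\<lambda>y x x'. g1 y x x' - g' y x x') \<in> NN W"
    and g2: "g2 \<in> G1 W" "(\<lambda>y x x'. g2 y x x' - g' y x x') \<in> NN W"
  shows "g1 = g2"
proof -
  let ?d = "\<lambda>y x x'. g1 y x x' - g2 y x x'"
  have "?d \<in> GG W" using g1 g2 by (simp add: G1_iff GG_def)
  then have "?d \<in> G1 W" using g1 g2 by (simp add: G1_iff colsum_weighted_diff)
  moreover have "?d \<in> NN W" using NN_diff[OF g1(2) g2(2)] by simp
  ultimately have "?d = (\<lambda>y x x'. 0)" by (rule G1_inter_NN_zero[OF W])
  then show ?thesis by (simp add: fun_eq_iff)
qed

lemma GG_eq_G1_plus_NN: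
  assumes W: "irreducible_tm W"
  shows "GG W = {(\<lambda>y x x'. g1 y x x' + n y x x') | g1 n. g1 \<in> G1 W \<and> n \<in> NN W}"
proof (intro equalityI subsetI)
  fix g' assume "g' \<in> GG W"
  then obtain g where g: "g \<in> G1 W" "(\<lambda>y x x'. g y x x' - g' y x x') \<in> NN W"
    using exists_G1_NN_translate[OF W] by blast
  have "(\<lambda>y x x'. 0) \<in> NN W"
    using NN_diff[OF g(2) g(2)] by simp
  from NN_diff[OF this g(2)] have "(\<lambda>y x x'. g' y x x' - g y x x') \<in> NN W" by simp
  then show "g' \<in> {(\<lambda>y x x'. g1 y x x' + n y x x') | g1 n. g1 \<in> G1 W \<and> n \<in> NN W}"
    using g(1) by (intro CollectI exI[of _ g] exI[of _ "\<lambda>y x x'. g' y x x' - g y x x'"]) simp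
next
  fix h assume "h \<in> {(\<lambda>y x x'. g1 y x x' + n y x x') | g1 n. g1 \<in> G1 W \<and> n \<in> NN W}"
  then obtain g1 n where "h = (\<lambda>y x x'. g1 y x x' + n y x x')" "g1 \<in> G1 W" "n \<in> NN W"
    by blast
  then show "h \<in> GG W" by (simp add: G1_def NN_def GG_def)
qed

theorem mainTheorem8:
  fixes W :: "'y::finite \<Rightarrow> 'x::finite \<Rightarrow> 'x \<Rightarrow> real"
  assumes "irreducible_tm W"
  shows "(\<forall>g' \<in> GG W. \<exists>!g. g \<in> G1 W \<and> (\<lambda>y x x'. g y x x' - g' y x x') \<in> NN W)
         \<and> G1 W \<inter> NN W = {\<lambda>y x x'. 0}
         \<and> GG W = {(\<lambda>y x x'. g1 y x x' + n y x x') | g1 n. g1 \<in> G1 W \<and> n \<in> NN W}"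
proof (intro conjI ballI)
  fix g' assume "g' \<in> GG W"
  show "\<exists>!g. g \<in> G1 W \<and> (\<lambda>y x x'. g y x x' - g' y x x') \<in> NN W"
    using exists_G1_NN_translate[OF assms \<open>g' \<in> GG W\<close>] unique_G1_NN_translate[OF assms]
    by blast
next
  have "(\<lambda>y x x'. 0) \<in> G1 W \<inter> NN W"
    by (auto simp: G1_def GG_def NN_iff_potential potential_def fun_eq_iff intro!: exI[of _ 0])
  then show "G1 W \<inter> NN W = {\<lambda>y x x'. 0}"
    using G1_inter_NN_zero[OF assms] by blast
next
  show "GG W = {(\<lambda>y x x'. g1 y x x' + n y x x') | g1 n. g1 \<in> G1 W \<and> n \<in> NN W}"
    using GG_eq_G1_plus_NN[OF assms] .
qed

end
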